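(* Let $(\mathcal S,\mathcal F,\mu,\prec)$ be an ordered probability space and let $g(x)=\mu\{z\in\mathcal S:z\prec x\}$. Then the set $\{(x,y)\in\mathcal S^2:x\prec y\text{ and }g(x)\ge g(y)\}$ is a $\mu\times\mu$-null set in $\mathcal S^2$.
   Context: An ordered probability space $(\mathcal S,\mathcal F,\mu,\prec)$ is a probability space $(\mathcal S,\mathcal F,\mu)$ equipped with a strict partial order $\prec$ on $\mathcal S$ such that $\{(x,y):x\prec y\}$ belongs to the product $\sigma$-field $\mathcal F\times\mathcal F$. *)

theory Defs
  imports "HOL-Probability.Probability"
begin

definition ordered_prob_space :: "'a measure \<Rightarrow> ('a \<Rightarrow> 'a \<Rightarrow> bool) \<Rightarrow> bool" where
  "ordered_prob_space M prec \<longleftrightarrow>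
     prob_space M \<and>
     (\<forall>x\<in>space M. \<not> prec x x) \<and>
     (\<forall>x\<in>space M. \<forall>y\<in>space M. \<forall>z\<in>space M. prec x y \<longrightarrow> prec y z \<longrightarrow> prec x z) \<and>
     {(x, y) \<in> space M \<times> space M. prec x y} \<in> sets (M \<Otimes>\<^sub>M M)"

end

theory Submission
  imports Defs
begin

text \<open>Fix \<open>y\<close> and let \<open>B = {x \<prec> y. g x \<ge> g y}\<close>. For \<open>x \<in> B\<close> the set \<open>{z \<prec> y}\<close>
  contains \<open>{z \<prec> x}\<close> and has no larger measure, so almost every point of \<open>B\<close> lies
  below \<open>x\<close>. Hence the relation \<open>\<prec>\<close> restricted to \<open>B\<close> has measure \<open>\<mu>(B)\<^sup>2\<close>, and so does
  its transpose; being asymmetric, the two are disjoint in \<open>B \<times> B\<close>, which forces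
  \<open>\<mu>(B) = 0\<close>. Fubini over \<open>y\<close> then gives the claim.\<close>

lemma (in pair_sigma_finite) null_sets_pair_measure_if_sections_null:
  assumes A: "A \<in> sets (M1 \<Otimes>\<^sub>M M2)"
    and sections: "\<And>y. y \<in> space M2 \<Longrightarrow> emeasure M1 ((\<lambda>x. (x, y)) -` A) = 0"
  shows "A \<in> null_sets (M1 \<Otimes>\<^sub>M M2)"
proof -
  have "emeasure (M1 \<Otimes>\<^sub>M M2) A = (\<integral>\<^sup>+y. emeasure M1 ((\<lambda>x. (x, y)) -` A) \<partial>M2)"
    by (rule emeasure_pair_measure_alt2[OF A])
  also have "\<dots> = 0"
    using sections by (simp add: nn_integral_cong)
  finally show ?thesis
    using A by (simp add: null_sets_def)
qed

lemma ennreal_double_le_self_iff: "a + a \<le> a \<longleftrightarrow> a = 0 \<or> a = (\<infinity>::ennreal)"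
  using ennreal_add_left_cancel_le[of a a 0] by auto

lemma (in finite_measure) emeasure_eq_0_if_asymmetric_with_full_sections:
  assumes B: "B \<in> sets M"
    and R: "R \<in> sets (M \<Otimes>\<^sub>M M)" "R \<subseteq> B \<times> B"
    and asym: "\<And>x y. (x, y) \<in> R \<Longrightarrow> (y, x) \<notin> R"
    and full: "\<And>y. y \<in> B \<Longrightarrow> emeasure M ((\<lambda>x. (x, y)) -` R) = emeasure M B"
  shows "emeasure M B = 0"
proof -
  interpret P: pair_sigma_finite M M ..
  define T where "T = (\<lambda>(x, y). (y, x)) -` R \<inter> space (M \<Otimes>\<^sub>M M)"
  have T: "T \<in> sets (M \<Otimes>\<^sub>M M)"
    unfolding T_def by (rule measurable_sets[OF measurable_pair_swap' R(1)])
  have sections: "(\<integral>\<^sup>+y. emeasure M ((\<lambda>x. (x, y)) -` R) \<partial>M) = emeasure M B * emeasure M B"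
  proof -
    have "(\<integral>\<^sup>+y. emeasure M ((\<lambda>x. (x, y)) -` R) \<partial>M) = (\<integral>\<^sup>+y. emeasure M B * indicator B y \<partial>M)"
    proof (rule nn_integral_cong)
      fix y
      show "emeasure M ((\<lambda>x. (x, y)) -` R) = emeasure M B * indicator B y"
      proof (cases "y \<in> B")
        case False
        then have "(\<lambda>x. (x, y)) -` R = {}" using R(2) by auto
        then show ?thesis using False by simp
      qed (simp add: full)
    qed
    also have "\<dots> = emeasure M B * emeasure M B"
      using B by (rule nn_integral_cmult_indicator)
    finally show ?thesis .
  qed
  have "emeasure (M \<Otimes>\<^sub>M M) R = emeasure M B * emeasure M B"
    using P.emeasure_pair_measure_alt2[OF R(1)] sections by simp
  moreover have "emeasure (M \<Otimes>\<^sub>M M) T = emeasure M B * emeasure M B"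
  proof -
    have "Pair y -` T = (\<lambda>x. (x, y)) -` R" if "y \<in> space M" for y
      using that R(2) sets.sets_into_space[OF B] by (auto simp: T_def space_pair_measure)
    then show ?thesis
      using emeasure_pair_measure_alt[OF T] sections by (simp cong: nn_integral_cong)
  qed
  moreover have "emeasure (M \<Otimes>\<^sub>M M) R + emeasure (M \<Otimes>\<^sub>M M) T \<le> emeasure (M \<Otimes>\<^sub>M M) (B \<times> B)"
  proof -
    have "R \<inter> T = {}"
      using asym by (auto simp: T_def)
    then have "emeasure (M \<Otimes>\<^sub>M M) R + emeasure (M \<Otimes>\<^sub>M M) T = emeasure (M \<Otimes>\<^sub>M M) (R \<union> T)"
      using R(1) T by (intro plus_emeasure)
    also have "\<dots> \<le> emeasure (M \<Otimes>\<^sub>M M) (B \<times> B)"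
      using R(2) B by (intro emeasure_mono) (auto simp: T_def)
    finally show ?thesis .
  qed
  ultimately have "emeasure M B * emeasure M B + emeasure M B * emeasure M B \<le> emeasure M B * emeasure M B"
    using B by (simp add: emeasure_pair_measure_Times)
  then have "emeasure M B * emeasure M B = 0"
    by (simp add: ennreal_double_le_self_iff ennreal_mult_eq_top_iff)
  then show ?thesis
    by simp
qed

locale strict_order_prob_space = prob_space M for M :: "'a measure" +
  fixes prec :: "'a \<Rightarrow> 'a \<Rightarrow> bool"
  assumes irrefl: "x \<in> space M \<Longrightarrow> \<not> prec x x"
    and trans: "x \<in> space M \<Longrightarrow> y \<in> space M \<Longrightarrow> z \<in> space M \<Longrightarrow> prec x y \<Longrightarrow> prec y z \<Longrightarrow> prec x z"
    and graph_sets: "{(x, y) \<in> space M \<times> space M. prec x y} \<in> sets (M \<Otimes>\<^sub>M M)"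

lemma strict_order_prob_spaceI:
  "ordered_prob_space M prec \<Longrightarrow> strict_order_prob_space M prec"
  unfolding ordered_prob_space_def strict_order_prob_space_def strict_order_prob_space_axioms_def
  by blast

context strict_order_prob_space
begin

lemma pred_prec [measurable]: "Measurable.pred (M \<Otimes>\<^sub>M M) (\<lambda>p. prec (fst p) (snd p))"
proof -
  have "{p \<in> space (M \<Otimes>\<^sub>M M). prec (fst p) (snd p)} = {(x, y) \<in> space M \<times> space M. prec x y}"
    by (auto simp: space_pair_measure)
  then show ?thesis
    using graph_sets by (simp add: pred_def)
qed

definition lower_set :: "'a \<Rightarrow> 'a set" where
  "lower_set y = {z \<in> space M. prec z y}"

definition lower_measure :: "'a \<Rightarrow> real" where
  "lower_measure y = measure M (lower_set y)"

lemma sets_lower_set [measurable]: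
  assumes "y \<in> space M"
  shows "lower_set y \<in> sets M"
proof -
  have "lower_set y = (\<lambda>x. (x, y)) -` {p \<in> space (M \<Otimes>\<^sub>M M). prec (fst p) (snd p)} \<inter> space M"
    using assms by (auto simp: lower_set_def space_pair_measure)
  also have "\<dots> \<in> sets M"
    using assms by measurable
  finally show ?thesis .
qed

lemma borel_measurable_lower_measure [measurable]: "lower_measure \<in> borel_measurable M"
proof -
  interpret P: pair_sigma_finite M M ..
  have "(\<lambda>y. enn2real (emeasure M ((\<lambda>x. (x, y)) -` {p \<in> space (M \<Otimes>\<^sub>M M). prec (fst p) (snd p)})))
      \<in> borel_measurable M"
    by (intro borel_measurable_enn2real P.measurable_emeasure_Pair2) measurable
  moreover have "enn2real (emeasure M ((\<lambda>x. (x, y)) -` {p \<in> space (M \<Otimes>\<^sub>M M). prec (fst p) (snd p)}))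
      = lower_measure y" if "y \<in> space M" for y
  proof -
    have "(\<lambda>x. (x, y)) -` {p \<in> space (M \<Otimes>\<^sub>M M). prec (fst p) (snd p)} = lower_set y"
      using that by (auto simp: lower_set_def space_pair_measure)
    then show ?thesis
      by (simp add: lower_measure_def measure_def)
  qed
  ultimately show ?thesis
    by (metis (no_types, lifting) measurable_cong)
qed

lemma lower_set_mono: "x \<in> space M \<Longrightarrow> y \<in> space M \<Longrightarrow> prec x y \<Longrightarrow> lower_set x \<subseteq> lower_set y"
  unfolding lower_set_def using trans by blast

lemma lower_set_Diff_null:
  assumes "x \<in> space M" "y \<in> space M" "prec x y" "lower_measure y \<le> lower_measure x"
  shows "lower_set y - lower_set x \<in> null_sets M"
proof -
  have "measure M (lower_set y - lower_set x) = lower_measure y - lower_measure x"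
    unfolding lower_measure_def using assms lower_set_mono
    by (intro finite_measure_Diff) auto
  then have "measure M (lower_set y - lower_set x) = 0"
    using assms(4) measure_nonneg[of M "lower_set y - lower_set x"] by linarith
  then show ?thesis
    using assms by (auto simp: null_sets_def emeasure_eq_measure)
qed

lemma emeasure_not_increasing_below_eq_0:
  assumes y: "y \<in> space M"
  shows "emeasure M {x \<in> space M. prec x y \<and> lower_measure y \<le> lower_measure x} = 0"
proof -
  define B where "B = {x \<in> space M. prec x y \<and> lower_measure y \<le> lower_measure x}"
  define R where "R = {p \<in> B \<times> B. prec (fst p) (snd p)}"
  have B: "B \<in> sets M"
  proof -
    have "B = lower_set y \<inter> {x \<in> space M. lower_measure y \<le> lower_measure x}"
      by (auto simp: B_def lower_set_def)
    also have "\<dots> \<in> sets M"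
      using y by measurable
    finally show ?thesis .
  qed
  have R: "R \<in> sets (M \<Otimes>\<^sub>M M)"
  proof -
    have "R = (B \<times> B) \<inter> {p \<in> space (M \<Otimes>\<^sub>M M). prec (fst p) (snd p)}"
      using sets.sets_into_space[OF B] by (auto simp: R_def space_pair_measure)
    also have "\<dots> \<in> sets (M \<Otimes>\<^sub>M M)"
      using B pred_prec by (intro sets.Int pair_measureI) (simp_all add: pred_def)
    finally show ?thesis .
  qed
  have asym: "(x, x') \<in> R \<Longrightarrow> (x', x) \<notin> R" for x x'
    using irrefl trans by (auto simp: R_def B_def)
  have full: "emeasure M ((\<lambda>x'. (x', x)) -` R) = emeasure M B" if x: "x \<in> B" for x
  proof -
    have "(\<lambda>x'. (x', x)) -` R = B - (lower_set y - lower_set x)"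
      using x by (auto simp: R_def B_def lower_set_def)
    moreover have "lower_set y - lower_set x \<in> null_sets M"
      using x y by (intro lower_set_Diff_null) (auto simp: B_def)
    ultimately show ?thesis
      using B by (simp add: emeasure_Diff_null_set)
  qed
  have "emeasure M B = 0"
    by (rule emeasure_eq_0_if_asymmetric_with_full_sections[OF B R _ asym full]) (auto simp: R_def)
  then show ?thesis
    unfolding B_def .
qed

lemma null_sets_not_increasing:
  "{(x, y) \<in> space M \<times> space M. prec x y \<and> lower_measure y \<le> lower_measure x} \<in> null_sets (M \<Otimes>\<^sub>M M)"
proof -
  interpret P: pair_sigma_finite M M ..
  let ?A = "{(x, y) \<in> space M \<times> space M. prec x y \<and> lower_measure y \<le> lower_measure x}"
  have "?A = {p \<in> space (M \<Otimes>\<^sub>M M). prec (fst p) (snd p) \<and> lower_measure (snd p) \<le> lower_measure (fst p)}"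
    by (auto simp: space_pair_measure)
  also have "\<dots> \<in> sets (M \<Otimes>\<^sub>M M)"
    by measurable
  finally show ?thesis
  proof (rule P.null_sets_pair_measure_if_sections_null)
    fix y assume y: "y \<in> space M"
    then have "(\<lambda>x. (x, y)) -` ?A = {x \<in> space M. prec x y \<and> lower_measure y \<le> lower_measure x}"
      by auto
    then show "emeasure M ((\<lambda>x. (x, y)) -` ?A) = 0"
      using y by (simp add: emeasure_not_increasing_below_eq_0)
  qed
qed

end

theorem lemma5p3:
  fixes M :: "'a measure" and prec :: "'a \<Rightarrow> 'a \<Rightarrow> bool" and g :: "'a \<Rightarrow> real"
  assumes "ordered_prob_space M prec"
    and "\<And>x. g x = measure M {z \<in> space M. prec z x}"
  shows "{(x, y) \<in> space M \<times> space M. prec x y \<and> g x \<ge> g y} \<in> null_sets (M \<Otimes>\<^sub>M M)"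
proof -
  interpret strict_order_prob_space M prec
    using assms(1) by (rule strict_order_prob_spaceI)
  have "g = lower_measure"
    using assms(2) by (simp add: fun_eq_iff lower_measure_def lower_set_def)
  then show ?thesis
    using null_sets_not_increasing by simp
qed

end
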